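(* Suppose the AA1 policy is applied at all times (in discrete time). If $$L_{AA1}:=\max_{\pi\in[0,1]}|f_1(0,\pi)-f_0(0,\pi)|<1,$$ then $|f_A(\pi,\pi')-f_B(\pi,\pi')|\le L_{AA1}|\pi-\pi'|$ for all $\pi,\pi'\in[0,1]$, and hence $|\pi_t(1|A)-\pi_t(1|B)|\to0$ for all initial profiles (society equalizes).
   Context: Two groups $A,B$; $\neg j$ is the group other than $j$. At time $t$ group $j$ has qualification profile $\pi_t(1|j)\in[0,1]$, $\pi_t(0|j)=1-\pi_t(1|j)$. Selection rates of a policy $\tau$: $\beta_t(v;j)=\tau(v;j)\pi_t(v|j)$. Dynamics: continuously differentiable $f_0,f_1:[0,1]^2\to[0,1]$, discrete time update $\pi_{t+1}(1|j)=\pi_t(1|j)f_1(\beta_t(0;j),\beta_t(1;j))+(1-\pi_t(1|j))f_0(\beta_t(0;j),\beta_t(1;j))$. Group $j$ is advantaged at time $t$ if $\pi_t(1|j)\ge\pi_t(1|\neg j)$. The AA1 policy with respect to advantaged $j$ is $\tau(1;j)=\pi_t(1|\neg j)/\pi_t(1|j)$, $\tau(0;j)=0$, $\tau(1;\neg j)=1$, $\tau(0;\neg j)=0$, i.e. selection rates $\beta_t(0;j)=\beta_t(0;\neg j)=0$, $\beta_t(1;j)=\beta_t(1;\neg j)=\pi_t(1|\neg j)$ (the policy is defined through these rates if a denominator vanishes). "Applying AA1 at all times" means at every $t$ AA1 is used with respect to the group advantaged at time $t$. Writing $\pi=\pi_t(1|A)$, $\pi'=\pi_t(1|B)$, the resulting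 joint update is $\pi_{t+1}(1|A)=f_A(\pi,\pi')$, $\pi_{t+1}(1|B)=f_B(\pi,\pi')$. *)

theory Defs
  imports "HOL-Analysis.Analysis"
begin

definition C1_on :: "(real \<times> real) set \<Rightarrow> (real \<times> real \<Rightarrow> real) \<Rightarrow> bool" where
  "C1_on S g \<longleftrightarrow> (\<exists>D :: real \<times> real \<Rightarrow> (real \<times> real) \<Rightarrow>\<^sub>L real.
      (\<forall>x\<in>S. (g has_derivative blinfun_apply (D x)) (at x within S)) \<and> continuous_on S D)"

text \<open>One-step qualification update of a group with profile p under selection rates
  b0 = beta(0;j), b1 = beta(1;j).\<close>
definition upd :: "(real \<times> real \<Rightarrow> real) \<Rightarrow> (real \<times> real \<Rightarrow> real) \<Rightarrow> real \<Rightarrow> real \<Rightarrow> real \<Rightarrow> real" where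
  "upd f0 f1 p b0 b1 = p * f1 (b0, b1) + (1 - p) * f0 (b0, b1)"

text \<open>AA1 selection rate of qualified individuals (the same in both groups): the
  qualification profile of the disadvantaged group. Here p = pi(1|A), q = pi(1|B);
  A is advantaged iff p >= q.\<close>
definition aa1_rate1 :: "real \<Rightarrow> real \<Rightarrow> real" where
  "aa1_rate1 p q = (if p \<ge> q then q else p)"

definition fA :: "(real \<times> real \<Rightarrow> real) \<Rightarrow> (real \<times> real \<Rightarrow> real) \<Rightarrow> real \<Rightarrow> real \<Rightarrow> real" where
  "fA f0 f1 p q = upd f0 f1 p 0 (aa1_rate1 p q)"

definition fB :: "(real \<times> real \<Rightarrow> real) \<Rightarrow> (real \<times> real \<Rightarrow> real) \<Rightarrow> real \<Rightarrow> real \<Rightarrow> real" where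
  "fB f0 f1 p q = upd f0 f1 q 0 (aa1_rate1 p q)"

primrec aa1_traj :: "(real \<times> real \<Rightarrow> real) \<Rightarrow> (real \<times> real \<Rightarrow> real) \<Rightarrow> real \<Rightarrow> real \<Rightarrow> nat \<Rightarrow> real \<times> real" where
  "aa1_traj f0 f1 p0 q0 0 = (p0, q0)"
| "aa1_traj f0 f1 p0 q0 (Suc t) =
     (let (p, q) = aa1_traj f0 f1 p0 q0 t in (fA f0 f1 p q, fB f0 f1 p q))"

text \<open>L_AA1 = max over pi in [0,1] of |f1(0,pi) - f0(0,pi)| (a maximum by continuity).\<close>
definition L_AA1 :: "(real \<times> real \<Rightarrow> real) \<Rightarrow> (real \<times> real \<Rightarrow> real) \<Rightarrow> real" where
  "L_AA1 f0 f1 = (SUP p\<in>{0..1}. \<bar>f1 (0, p) - f0 (0, p)\<bar>)"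

end

theory Submission
  imports Defs
begin

text \<open>Under AA1 both groups are selected at the same rates \<open>(0, r)\<close>, with \<open>r\<close> the
  profile of the disadvantaged group, so the two updates differ only in the weight given to
  \<open>f\<^sub>1(0, r)\<close> versus \<open>f\<^sub>0(0, r)\<close>: \<open>f\<^sub>A - f\<^sub>B = (\<pi> - \<pi>') (f\<^sub>1(0, r) - f\<^sub>0(0, r))\<close>.
  Hence every step shrinks the gap between the groups by the factor \<open>L\<^sub>AA1 < 1\<close>, and the
  gap after \<open>t\<close> steps is at most \<open>L\<^sub>AA1\<^sup>t\<close>.\<close>

lemma fA_minus_fB:
  "fA f0 f1 p q - fB f0 f1 p q = (p - q) * (f1 (0, aa1_rate1 p q) - f0 (0, aa1_rate1 p q))"
  unfolding fA_def fB_def upd_def by (simp add: algebra_simps)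

lemma aa1_rate1_in_unit: "p \<in> {0..1} \<Longrightarrow> q \<in> {0..1} \<Longrightarrow> aa1_rate1 p q \<in> {0..(1::real)}"
  unfolding aa1_rate1_def by auto

context
  fixes f0 f1 :: "real \<times> real \<Rightarrow> real"
  assumes range0: "\<forall>x\<in>{0..1} \<times> {0..1}. f0 x \<in> {0..1}"
    and range1: "\<forall>x\<in>{0..1} \<times> {0..1}. f1 x \<in> {0..1}"
begin

lemma upd_in_unit:
  assumes "p \<in> {0..1}" "b0 \<in> {0..1}" "b1 \<in> {0..1}"
  shows "upd f0 f1 p b0 b1 \<in> {0..1}"
proof -
  have f: "f0 (b0, b1) \<in> {0..1}" "f1 (b0, b1) \<in> {0..1}"
    using assms range0 range1 by auto
  have "p * f1 (b0, b1) + (1 - p) * f0 (b0, b1) \<le> p * 1 + (1 - p) * 1"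
    using f assms by (intro add_mono mult_left_mono) auto
  moreover have "0 \<le> p * f1 (b0, b1) + (1 - p) * f0 (b0, b1)"
    using f assms by auto
  ultimately show ?thesis unfolding upd_def by auto
qed

lemma fA_in_unit: "p \<in> {0..1} \<Longrightarrow> q \<in> {0..1} \<Longrightarrow> fA f0 f1 p q \<in> {0..1}"
  unfolding fA_def by (intro upd_in_unit aa1_rate1_in_unit) auto

lemma fB_in_unit: "p \<in> {0..1} \<Longrightarrow> q \<in> {0..1} \<Longrightarrow> fB f0 f1 p q \<in> {0..1}"
  unfolding fB_def by (intro upd_in_unit aa1_rate1_in_unit) auto

lemma abs_diff_le_L_AA1:
  assumes "r \<in> {0..1}"
  shows "\<bar>f1 (0, r) - f0 (0, r)\<bar> \<le> L_AA1 f0 f1"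
proof -
  have "bdd_above ((\<lambda>p. \<bar>f1 (0, p) - f0 (0, p)\<bar>) ` {0..1})"
  proof (rule bdd_aboveI2)
    fix p :: real
    assume "p \<in> {0..1}"
    then have "f0 (0, p) \<in> {0..1}" "f1 (0, p) \<in> {0..1}"
      using range0 range1 by auto
    then show "\<bar>f1 (0, p) - f0 (0, p)\<bar> \<le> 1" by auto
  qed
  then show ?thesis
    unfolding L_AA1_def by (rule cSUP_upper[OF assms])
qed

lemma L_AA1_nonneg: "0 \<le> L_AA1 f0 f1"
  using abs_diff_le_L_AA1[of 0] abs_ge_zero order_trans by fastforce

lemma fA_fB_gap_le:
  assumes "p \<in> {0..1}" "q \<in> {0..1}"
  shows "\<bar>fA f0 f1 p q - fB f0 f1 p q\<bar> \<le> L_AA1 f0 f1 * \<bar>p - q\<bar>"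
proof -
  have "\<bar>fA f0 f1 p q - fB f0 f1 p q\<bar>
      = \<bar>p - q\<bar> * \<bar>f1 (0, aa1_rate1 p q) - f0 (0, aa1_rate1 p q)\<bar>"
    by (simp add: fA_minus_fB abs_mult)
  also have "\<dots> \<le> \<bar>p - q\<bar> * L_AA1 f0 f1"
    using abs_diff_le_L_AA1[OF aa1_rate1_in_unit[OF assms]] by (simp add: mult_left_mono)
  finally show ?thesis by (simp add: mult.commute)
qed

lemma aa1_traj_in_unit:
  assumes "p0 \<in> {0..1}" "q0 \<in> {0..1}"
  shows "fst (aa1_traj f0 f1 p0 q0 t) \<in> {0..1} \<and> snd (aa1_traj f0 f1 p0 q0 t) \<in> {0..1}"
proof (induction t)
  case 0
  then show ?case using assms by simp
next
  case (Suc t)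
  then show ?case
    by (cases "aa1_traj f0 f1 p0 q0 t") (simp del: atLeastAtMost_iff add: fA_in_unit fB_in_unit)
qed

lemma aa1_traj_gap_le:
  assumes "p0 \<in> {0..1}" "q0 \<in> {0..1}"
  shows "\<bar>fst (aa1_traj f0 f1 p0 q0 t) - snd (aa1_traj f0 f1 p0 q0 t)\<bar>
           \<le> L_AA1 f0 f1 ^ t * \<bar>p0 - q0\<bar>"
proof (induction t)
  case 0
  then show ?case by simp
next
  case (Suc t)
  obtain p q where pq: "aa1_traj f0 f1 p0 q0 t = (p, q)" by fastforce
  have unit: "p \<in> {0..1}" "q \<in> {0..1}"
    using aa1_traj_in_unit[OF assms, of t] pq by auto
  have "\<bar>fA f0 f1 p q - fB f0 f1 p q\<bar> \<le> L_AA1 f0 f1 * \<bar>p - q\<bar>"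
    using fA_fB_gap_le[OF unit] .
  also have "\<dots> \<le> L_AA1 f0 f1 * (L_AA1 f0 f1 ^ t * \<bar>p0 - q0\<bar>)"
    using Suc.IH pq L_AA1_nonneg by (simp add: mult_left_mono)
  finally show ?case using pq by (simp add: mult.assoc)
qed

lemma aa1_traj_gap_tendsto_zero:
  assumes "L_AA1 f0 f1 < 1" "p0 \<in> {0..1}" "q0 \<in> {0..1}"
  shows "(\<lambda>t. \<bar>fst (aa1_traj f0 f1 p0 q0 t) - snd (aa1_traj f0 f1 p0 q0 t)\<bar>) \<longlonglongrightarrow> 0"
proof (rule Lim_null_comparison)
  show "\<forall>\<^sub>F t in sequentially.
      norm \<bar>fst (aa1_traj f0 f1 p0 q0 t) - snd (aa1_traj f0 f1 p0 q0 t)\<bar>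
        \<le> L_AA1 f0 f1 ^ t * \<bar>p0 - q0\<bar>"
    using aa1_traj_gap_le[OF assms(2,3)] by simp
  show "(\<lambda>t. L_AA1 f0 f1 ^ t * \<bar>p0 - q0\<bar>) \<longlonglongrightarrow> 0"
    using L_AA1_nonneg assms(1) by (intro tendsto_mult_left_zero LIMSEQ_realpow_zero) auto
qed

end

theorem mainTheorem4:
  fixes f0 f1 :: "real \<times> real \<Rightarrow> real"
  assumes C1_0: "C1_on ({0..1} \<times> {0..1}) f0"
    and C1_1: "C1_on ({0..1} \<times> {0..1}) f1"
    and range0: "\<forall>x\<in>{0..1} \<times> {0..1}. f0 x \<in> {0..1}"
    and range1: "\<forall>x\<in>{0..1} \<times> {0..1}. f1 x \<in> {0..1}"
    and L: "L_AA1 f0 f1 < 1"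
  shows "(\<forall>p\<in>{0..1}. \<forall>q\<in>{0..1}.
            \<bar>fA f0 f1 p q - fB f0 f1 p q\<bar> \<le> L_AA1 f0 f1 * \<bar>p - q\<bar>)
       \<and> (\<forall>p0\<in>{0..1}. \<forall>q0\<in>{0..1}.
            (\<lambda>t. \<bar>fst (aa1_traj f0 f1 p0 q0 t) - snd (aa1_traj f0 f1 p0 q0 t)\<bar>) \<longlonglongrightarrow> 0)"
  using fA_fB_gap_le[OF range0 range1] aa1_traj_gap_tendsto_zero[OF range0 range1 L] by blast

end
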